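(* Let $f=(f_1,f_2):\mathbb{R}^2\times\mathbb{R}^2\to\mathbb{R}^2$ be continuously differentiable with variables $(x,y_1,y_2)$, $x\in\mathbb{R}^2$, and let $(a,b)$, $b=(b_1,b_2)$, satisfy $f(a,b)=(0,0)$ and $\det J_{f,y}(a,b)\ne0$, where $J_{f,y}=(\partial_{y_j}f_i)_{i,j}$. Then there exist a closed rectangle $R\subset\mathbb{R}^2$ containing $a$, closed intervals $V_1\ni b_1$, $V_2\ni b_2$ (put $V=V_1\times V_2$), indices $j\ne j'$ in $\{1,2\}$, and functions $p:R\times V_{j'}\to V_j$ and $q:R\to V_{j'}$ such that for all $x\in R$, $f(x,y)=(0,0)$ where $y_{j'}=q(x)$ and $y_j=p(x,q(x))$; moreover $p$ and $q$ are the limits, in the $\Gamma$-Cesàro sense, of their dyadic block-moment polynomial approximants $p_n=P_n(p)$ and $q_m=P_m(q)$ as $n,m\to\infty$.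
   Context: Rectangles/boxes are parallel to coordinate axes. For a closed box $Q=\prod_{k=1}^d[l_k,l_k+s_k]\subset\mathbb{R}^d$ and $n\ge0$, $\Gamma_n$ is the dyadic partition of $Q$ into the $2^{nd}$ boxes $\prod_k[l_k+(i_k-1)s_k2^{-n},\,l_k+i_ks_k2^{-n}]$, $1\le i_k\le 2^n$. For a continuous $h:Q\to\mathbb{R}$ and a base point $c\in Q$, $P_n(h)$ denotes the unique polynomial of degree at most $2^n-1$ in each variable $(z_k-c_k)$ such that $\int_B P_n(h)=\int_B h$ for every $B\in\Gamma_n$ (uniqueness follows from the invertibility of the matrices $\big(\int_{I_i}(t-c_k)^{j-1}dt\big)_{i,j}$ over the dyadic subintervals $I_i$). A sequence of integrable functions $h_n$ converges to $h$ in the $\Gamma$-Cesàro sense if for every $z\in Q$ and $\epsilon>0$ there is $N$ such that for all $n\ge N$ and every $B\in\Gamma_n$ containing $z$, $\left|\frac{1}{|B|}\int_B h_n-h(z)\right|<\epsilon$. Here $p$ is considered on the box $R\times V_{j'}\subset\mathbb{R}^3$ with base point $(a,b_{j'})$ and $q$ on $R$ with base point $a$. *)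

theory Defs
  imports "HOL-Analysis.Analysis"
begin

text \<open>A closed box Q = prod_k [l_k, l_k + s_k] is described by its corner l and side vector s.\<close>

definition dyadic_boxes :: "real^'d \<Rightarrow> real^'d \<Rightarrow> nat \<Rightarrow> (real^'d) set set" where
  "dyadic_boxes l s n =
     {cbox (\<chi> k. l$k + (real (i k) - 1) * s$k / 2^n) (\<chi> k. l$k + real (i k) * s$k / 2^n)
        | i :: 'd \<Rightarrow> nat. \<forall>k. 1 \<le> i k \<and> i k \<le> 2^n}"

definition tensor_poly :: "real^'d \<Rightarrow> nat \<Rightarrow> (real^'d \<Rightarrow> real) \<Rightarrow> bool" where
  "tensor_poly c N P \<longleftrightarrow>
     (\<exists>coef :: ('d \<Rightarrow> nat) \<Rightarrow> real. \<forall>z. P z =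
        (\<Sum>\<alpha>\<in>{\<alpha> :: 'd \<Rightarrow> nat. \<forall>k. \<alpha> k \<le> N}. coef \<alpha> * (\<Prod>k\<in>UNIV. (z$k - c$k) ^ (\<alpha> k))))"

definition block_moment_poly ::
  "real^'d \<Rightarrow> real^'d \<Rightarrow> real^'d \<Rightarrow> nat \<Rightarrow> (real^'d \<Rightarrow> real) \<Rightarrow> (real^'d \<Rightarrow> real)" where
  "block_moment_poly l s c n h =
     (THE P. tensor_poly c (2^n - 1) P \<and> (\<forall>B\<in>dyadic_boxes l s n. integral B P = integral B h))"

definition gamma_cesaro :: "real^'d \<Rightarrow> real^'d \<Rightarrow> (nat \<Rightarrow> real^'d \<Rightarrow> real) \<Rightarrow> (real^'d \<Rightarrow> real) \<Rightarrow> bool" where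
  "gamma_cesaro l s hs h \<longleftrightarrow>
     (\<forall>z\<in>cbox l (l + s). \<forall>\<epsilon>>0. \<exists>N. \<forall>n\<ge>N. \<forall>B\<in>dyadic_boxes l s n.
        z \<in> B \<longrightarrow> \<bar>integral B (hs n) / Henstock_Kurzweil_Integration.content B - h z\<bar> < \<epsilon>)"

definition ext3 :: "real^2 \<Rightarrow> real \<Rightarrow> real^3" where
  "ext3 x t = vector [x$1, x$2, t]"

end

theory Submission
  imports Defs "HOL-Computational_Algebra.Polynomial"
begin

text \<open>
  The implicit function theorem, obtained from the inverse function theorem applied to
  (x, y) \<mapsto> (x, f (x, y)), gives a continuous solution y of f (x, y x) = 0 near a; q and p are
  its two coordinates, restricted to a small box around a.

  The \<Gamma>-Cesaro convergence holds for every continuous function h: P_n(h) has the same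
  integral as h over every dyadic box, so its averages over the boxes containing z are averages
  of h over boxes of diameter O(2^-n), which tend to h z by uniform continuity. Existence and
  uniqueness of P_n(h) come from a dual basis: in each variable the derivatives of
  polynomials interpolating step functions at the 2^n + 1 knots have integral 1 over one
  dyadic interval and 0 over the others, and their tensor products span the polynomials of
  degree < 2^n in each variable.
\<close>

lemma integral_poly_pderiv:
  fixes Q :: "real poly"
  assumes "a \<le> b"
  shows "integral {a..b} (poly (pderiv Q)) = poly Q b - poly Q a"
  by (intro integral_unique fundamental_theorem_of_calculus assms)
     (simp add: has_real_derivative_iff_has_vector_derivative[symmetric]
        DERIV_subset[OF poly_DERIV])

lemma exists_pderiv_eq:
  fixes P :: "'a::field_char_0 poly"
  obtains Q where "pderiv Q = P" "degree Q \<le> Suc (degree P)"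
proof
  let ?Q = "\<Sum>j\<le>degree P. monom (coeff P j / of_nat (Suc j)) (Suc j)"
  have "pderiv ?Q = (\<Sum>j\<le>degree P. pderiv (monom (coeff P j / of_nat (Suc j)) (Suc j)))"
    using higher_pderiv_sum[of 1] by simp
  also have "\<dots> = (\<Sum>j\<le>degree P. monom (coeff P j) j)"
    by (simp add: pderiv_monom del: of_nat_Suc)
  finally have "pderiv ?Q = (\<Sum>j\<le>degree P. monom (coeff P j) j)" .
  then show "pderiv ?Q = P" by (simp add: poly_as_sum_of_monoms)
  show "degree ?Q \<le> Suc (degree P)"
    by (intro degree_sum_le) (auto intro: order.trans[OF degree_monom_le])
qed

lemma exists_interpolating_poly:
  fixes x :: "nat \<Rightarrow> 'a::field"
  assumes inj: "inj_on x {..N}"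
  obtains Q where "degree Q \<le> N" "\<And>r. r \<le> N \<Longrightarrow> poly Q (x r) = v r"
proof
  define L where "L r = (\<Prod>r'\<in>{..N}-{r}. [:-x r', 1:])" for r
  have poly_L: "poly (L r) y = (\<Prod>r'\<in>{..N}-{r}. y - x r')" for r y
    by (simp add: L_def poly_prod)
  have "degree (L r) \<le> N" if "r \<le> N" for r
  proof -
    have "degree (L r) \<le> (\<Sum>r'\<in>{..N}-{r}. degree [:-x r', 1:])"
      unfolding L_def using degree_prod_sum_le[of "{..N}-{r}" "\<lambda>r'. [:-x r', 1:]"]
      by (simp add: comp_def)
    then show ?thesis using that by simp
  qed
  then show "degree (\<Sum>r\<le>N. smult (v r / poly (L r) (x r)) (L r)) \<le> N"
    by (intro degree_sum_le) (auto intro: order.trans[OF degree_smult_le])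
  fix r0 assume "r0 \<le> N"
  have "poly (L r) (x r0) = 0" if "r \<le> N" "r \<noteq> r0" for r
    unfolding poly_L using that \<open>r0 \<le> N\<close> by (intro prod_zero) auto
  moreover have "poly (L r0) (x r0) \<noteq> 0"
    unfolding poly_L using inj \<open>r0 \<le> N\<close> by (auto simp: inj_on_def)
  ultimately have "poly (\<Sum>r\<le>N. smult (v r / poly (L r) (x r)) (L r)) (x r0)
      = (\<Sum>r\<le>N. if r = r0 then v r0 else 0)"
    unfolding poly_sum by (intro sum.cong) auto
  then show "poly (\<Sum>r\<le>N. smult (v r / poly (L r) (x r)) (L r)) (x r0) = v r0"
    using \<open>r0 \<le> N\<close> by simp
qed

lemma poly_eq_0_if_block_integrals_eq_0:
  fixes t :: "nat \<Rightarrow> real"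
  assumes t: "strict_mono t" and deg: "degree P \<le> N"
    and zero: "\<And>i. i \<le> N \<Longrightarrow> integral {t i..t (Suc i)} (poly P) = 0"
  shows "P = 0"
proof -
  obtain Q where Q: "pderiv Q = P" "degree Q \<le> Suc (degree P)"
    by (rule exists_pderiv_eq)
  have Q_const: "poly Q (t r) = poly Q (t 0)" if "r \<le> Suc N" for r
    using that
  proof (induction r)
    case (Suc r)
    then show ?case
      using zero[of r] integral_poly_pderiv[of "t r" "t (Suc r)" Q] t Q(1)
      by (simp add: strict_mono_less_eq)
  qed simp
  have "card (t ` {..Suc N}) = Suc (Suc N)"
    using strict_mono_imp_inj_on[OF t] by (simp add: card_image)
  then have "Q = [:poly Q (t 0):]"
  proof (intro poly_eqI_degree[where A = "t ` {..Suc N}"])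
    fix y assume "y \<in> t ` {..Suc N}"
    then obtain r where "r \<le> Suc N" "y = t r" by auto
    then show "poly Q y = poly [:poly Q (t 0):] y"
      using Q_const[OF \<open>r \<le> Suc N\<close>] by simp
  qed (use Q(2) deg in auto)
  then have "pderiv Q = pderiv [:poly Q (t 0):]"
    by (rule arg_cong)
  with Q(1) show "P = 0"
    by simp
qed

text \<open>The witness is the derivative of a polynomial interpolating the step function
  r \<mapsto> [i < r] at the knots.\<close>

lemma exists_block_dual_poly:
  fixes t :: "nat \<Rightarrow> real"
  assumes t: "strict_mono t"
  obtains e where "degree e \<le> N"
    "\<And>i'. i' \<le> N \<Longrightarrow> integral {t i'..t (Suc i')} (poly e) = (if i' = i then 1 else 0)"
proof -
  obtain Q where deg: "degree Q \<le> Suc N"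
    and Q: "\<And>r. r \<le> Suc N \<Longrightarrow> poly Q (t r) = (if i < r then 1 else 0)"
    using exists_interpolating_poly[OF strict_mono_imp_inj_on[OF t],
        of "Suc N" "\<lambda>r. if i < r then 1 else 0"]
    by blast
  show ?thesis
  proof
    show "degree (pderiv Q) \<le> N"
      using deg by (simp add: degree_pderiv)
    fix i' assume "i' \<le> N"
    then show "integral {t i'..t (Suc i')} (poly (pderiv Q)) = (if i' = i then 1 else 0)"
      using t by (simp add: integral_poly_pderiv strict_mono_less_eq Q)
  qed
qed

lemma poly_eq_sum_block_integrals:
  fixes t :: "nat \<Rightarrow> real" and e :: "nat \<Rightarrow> real poly"
  assumes t: "strict_mono t" and deg: "degree P \<le> N"
    and e_deg: "\<And>i. i \<le> N \<Longrightarrow> degree (e i) \<le> N"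
    and e_dual: "\<And>i i'. i \<le> N \<Longrightarrow> i' \<le> N \<Longrightarrow>
      integral {t i'..t (Suc i')} (poly (e i)) = (if i' = i then 1 else 0)"
  shows "P = (\<Sum>i\<le>N. smult (integral {t i..t (Suc i)} (poly P)) (e i))"
proof -
  let ?\<mu> = "\<lambda>i. integral {t i..t (Suc i)} (poly P)"
  have "P - (\<Sum>i\<le>N. smult (?\<mu> i) (e i)) = 0"
  proof (rule poly_eq_0_if_block_integrals_eq_0[OF t])
    show "degree (P - (\<Sum>i\<le>N. smult (?\<mu> i) (e i))) \<le> N"
      using deg e_deg
      by (intro degree_diff_le degree_sum_le) (auto intro: order.trans[OF degree_smult_le])
    fix i' assume "i' \<le> N"
    have "integral {t i'..t (Suc i')} (\<lambda>x. \<Sum>i\<le>N. ?\<mu> i * poly (e i) x)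
        = (\<Sum>i\<le>N. ?\<mu> i * integral {t i'..t (Suc i')} (poly (e i)))"
      by (subst integral_sum) (auto intro!: integrable_continuous_real continuous_intros)
    also have "\<dots> = (\<Sum>i\<le>N. ?\<mu> i * (if i' = i then 1 else 0))"
      using \<open>i' \<le> N\<close> by (simp add: e_dual)
    also have "\<dots> = ?\<mu> i'"
      using \<open>i' \<le> N\<close> by (simp add: if_distrib cong: if_cong)
    finally have "integral {t i'..t (Suc i')} (\<lambda>x. \<Sum>i\<le>N. ?\<mu> i * poly (e i) x) = ?\<mu> i'" .
    moreover have "poly (P - (\<Sum>i\<le>N. smult (?\<mu> i) (e i)))
        = (\<lambda>x. poly P x - (\<Sum>i\<le>N. ?\<mu> i * poly (e i) x))"
      by (simp add: fun_eq_iff poly_sum)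
    ultimately show "integral {t i'..t (Suc i')} (poly (P - (\<Sum>i\<le>N. smult (?\<mu> i) (e i)))) = 0"
      by (simp add: integral_diff integrable_continuous_real continuous_intros)
  qed
  then show ?thesis by simp
qed

lemma poly_eq_sum_powers_at:
  fixes P :: "'a::idom poly"
  assumes "degree P \<le> N"
  obtains a where "\<And>x. poly P x = (\<Sum>j\<le>N. a j * (x - c)^j)"
proof
  let ?P = "pcompose P [:c, 1:]"
  have deg: "degree ?P \<le> N"
    using assms by (simp add: degree_pcompose)
  fix x
  have "poly P x = poly ?P (x - c)"
    by (simp add: poly_pcompose)
  also have "\<dots> = (\<Sum>j\<le>degree ?P. coeff ?P j * (x - c)^j)"
    by (rule poly_altdef)
  also have "\<dots> = (\<Sum>j\<le>N. coeff ?P j * (x - c)^j)"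
    using deg by (intro sum.mono_neutral_left) (auto simp: coeff_eq_0)
  finally show "poly P x = (\<Sum>j\<le>N. coeff ?P j * (x - c)^j)" .
qed

lemma integral_lborel_prod:
  fixes f :: "'a::euclidean_space \<Rightarrow> real \<Rightarrow> real"
  assumes int: "\<And>i. i \<in> Basis \<Longrightarrow> integrable lborel (f i)"
  shows "integral\<^sup>L lborel (\<lambda>x. \<Prod>i\<in>Basis. f i (x \<bullet> i)) = (\<Prod>i\<in>Basis. integral\<^sup>L lborel (f i))"
proof -
  interpret product_sigma_finite "\<lambda>_::'a. lborel :: real measure"
    by (simp add: product_sigma_finite_def sigma_finite_lborel)
  have [measurable]: "f i \<in> borel_measurable borel" if "i \<in> Basis" for i
    using int[OF that] by auto
  have "integral\<^sup>L lborel (\<lambda>x. \<Prod>i\<in>Basis. f i (x \<bullet> i))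
      = integral\<^sup>L (distr (\<Pi>\<^sub>M b\<in>Basis. lborel) borel (\<lambda>y. \<Sum>b\<in>Basis. y b *\<^sub>R b))
          (\<lambda>x. \<Prod>i\<in>Basis. f i (x \<bullet> i))"
    by (subst lborel_eq) (rule refl)
  also have "\<dots> = integral\<^sup>L (\<Pi>\<^sub>M b\<in>Basis. lborel) (\<lambda>y. \<Prod>i\<in>Basis. f i ((\<Sum>b\<in>Basis. y b *\<^sub>R b) \<bullet> i))"
    by (rule integral_distr) measurable
  also have "\<dots> = integral\<^sup>L (\<Pi>\<^sub>M b\<in>Basis. lborel) (\<lambda>y. \<Prod>i\<in>Basis. f i (y i))"
    by (intro Bochner_Integration.integral_cong prod.cong refl)
       (simp add: inner_sum_left inner_Basis if_distrib cong: if_cong)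
  also have "\<dots> = (\<Prod>i\<in>Basis. integral\<^sup>L lborel (f i))"
    by (rule product_integral_prod) (simp_all add: int)
  finally show ?thesis .
qed

lemma has_integral_prod_Basis:
  fixes a b :: "'a::euclidean_space" and g :: "'a \<Rightarrow> real \<Rightarrow> real"
  assumes cont: "\<And>i. i \<in> Basis \<Longrightarrow> continuous_on {a \<bullet> i..b \<bullet> i} (g i)"
  shows "((\<lambda>x. \<Prod>i\<in>Basis. g i (x \<bullet> i)) has_integral (\<Prod>i\<in>Basis. integral {a \<bullet> i..b \<bullet> i} (g i)))
    (cbox a b)"
proof -
  define G where "G i y = indicator {a \<bullet> i..b \<bullet> i} y *\<^sub>R g i y" for i y
  have set_int: "set_integrable lborel {a \<bullet> i..b \<bullet> i} (g i)" if "i \<in> Basis" for i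
    by (rule borel_integrable_atLeastAtMost'[OF cont[OF that]])
  then have "integrable lborel (G i)" if "i \<in> Basis" for i
    using that by (simp add: G_def[abs_def] set_integrable_def)
  moreover have "integral\<^sup>L lborel (G i) = integral {a \<bullet> i..b \<bullet> i} (g i)" if "i \<in> Basis" for i
    using set_borel_integral_eq_integral(2)[OF set_int[OF that]]
    by (simp add: G_def[abs_def] set_lebesgue_integral_def)
  ultimately have "integral\<^sup>L lborel (\<lambda>x. \<Prod>i\<in>Basis. G i (x \<bullet> i))
      = (\<Prod>i\<in>Basis. integral {a \<bullet> i..b \<bullet> i} (g i))"
    by (simp add: integral_lborel_prod)
  moreover have "(\<lambda>x. \<Prod>i\<in>Basis. G i (x \<bullet> i))
      = (\<lambda>x. indicator (cbox a b) x *\<^sub>R (\<Prod>i\<in>Basis. g i (x \<bullet> i)))"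
    by (auto simp: fun_eq_iff G_def prod.distrib cbox_def indicator_def)
  moreover have "integrable lborel (\<lambda>x. indicator (cbox a b) x *\<^sub>R (\<Prod>i\<in>Basis. g i (x \<bullet> i)))"
    using cont
    by (intro borel_integrable_compact compact_cbox continuous_intros continuous_on_compose2[OF cont])
       (auto simp: cbox_def)
  ultimately have "((\<lambda>x. indicator (cbox a b) x *\<^sub>R (\<Prod>i\<in>Basis. g i (x \<bullet> i)))
      has_integral (\<Prod>i\<in>Basis. integral {a \<bullet> i..b \<bullet> i} (g i))) UNIV"
    using has_integral_integral_lborel by metis
  moreover have "(\<lambda>x. indicator (cbox a b) x *\<^sub>R (\<Prod>i\<in>Basis. g i (x \<bullet> i)))
      = (\<lambda>x. if x \<in> cbox a b then \<Prod>i\<in>Basis. g i (x \<bullet> i) else 0)"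
    by (simp add: fun_eq_iff indicator_def)
  ultimately show ?thesis
    by (simp only: has_integral_restrict_UNIV)
qed

lemma has_integral_prod_cart:
  fixes u v :: "real^'d" and g :: "'d \<Rightarrow> real \<Rightarrow> real"
  assumes cont: "\<And>k. continuous_on {u$k..v$k} (g k)"
  shows "((\<lambda>z. \<Prod>k\<in>UNIV. g k (z$k)) has_integral (\<Prod>k\<in>UNIV. integral {u$k..v$k} (g k))) (cbox u v)"
proof -
  define g' where "g' b = g (SOME k. axis k 1 = b)" for b :: "real^'d"
  have g': "g' (axis k 1) = g k" for k
    by (simp add: g'_def axis_eq_axis)
  have Basis: "(Basis :: (real^'d) set) = range (\<lambda>k. axis k 1)"
    by (auto simp: Basis_vec_def)
  have "inj (\<lambda>k::'d. axis k (1::real))"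
    by (auto simp: inj_def axis_eq_axis)
  then have reindex: "(\<Prod>b\<in>Basis. F b) = (\<Prod>k\<in>UNIV. F (axis k 1))" for F :: "real^'d \<Rightarrow> real"
    by (simp add: Basis prod.reindex)
  have "((\<lambda>z. \<Prod>b\<in>Basis. g' b (z \<bullet> b))
      has_integral (\<Prod>b\<in>Basis. integral {u \<bullet> b..v \<bullet> b} (g' b))) (cbox u v)"
    using cont by (intro has_integral_prod_Basis) (auto simp: Basis g' inner_axis)
  then show ?thesis
    by (simp add: reindex g' inner_axis)
qed

lemma tensor_poly_iff_PiE:
  fixes c :: "real^'d"
  shows "tensor_poly c N P \<longleftrightarrow> (\<exists>coef. \<forall>z. P z =
     (\<Sum>\<alpha>\<in>Pi\<^sub>E UNIV (\<lambda>_. {..N}). coef \<alpha> * (\<Prod>k\<in>UNIV. (z$k - c$k) ^ \<alpha> k)))"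
proof -
  have "{\<alpha> :: 'd \<Rightarrow> nat. \<forall>k. \<alpha> k \<le> N} = Pi\<^sub>E UNIV (\<lambda>_. {..N})"
    by (auto simp: PiE_UNIV_domain)
  then show ?thesis
    unfolding tensor_poly_def by simp
qed

lemma tensor_poly_sum:
  assumes "finite I" and "\<And>i. i \<in> I \<Longrightarrow> tensor_poly c N (P i)"
  shows "tensor_poly c N (\<lambda>z. \<Sum>i\<in>I. w i * P i z)"
proof -
  obtain coef where coef: "\<And>i z. i \<in> I \<Longrightarrow>
      P i z = (\<Sum>\<alpha>\<in>Pi\<^sub>E UNIV (\<lambda>_. {..N}). coef i \<alpha> * (\<Prod>k\<in>UNIV. (z$k - c$k) ^ \<alpha> k))"
    using assms(2) unfolding tensor_poly_iff_PiE by metis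
  have "(\<Sum>i\<in>I. w i * P i z)
      = (\<Sum>\<alpha>\<in>Pi\<^sub>E UNIV (\<lambda>_. {..N}). (\<Sum>i\<in>I. w i * coef i \<alpha>) * (\<Prod>k\<in>UNIV. (z$k - c$k) ^ \<alpha> k))" for z
    by (simp add: coef sum_distrib_left sum_distrib_right mult.assoc sum.swap[of _ I])
  then show ?thesis
    unfolding tensor_poly_iff_PiE by (intro exI[of _ "\<lambda>\<alpha>. \<Sum>i\<in>I. w i * coef i \<alpha>"]) blast
qed

lemma tensor_poly_prod:
  assumes "\<And>k x. g k x = (\<Sum>j\<le>N. a k j * (x - c$k)^j)"
  shows "tensor_poly c N (\<lambda>z. \<Prod>k\<in>UNIV. g k (z$k))"
proof -
  have "(\<Prod>k\<in>UNIV. g k (z$k))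
      = (\<Sum>\<alpha>\<in>Pi\<^sub>E UNIV (\<lambda>_. {..N}). (\<Prod>k\<in>UNIV. a k (\<alpha> k)) * (\<Prod>k\<in>UNIV. (z$k - c$k) ^ \<alpha> k))" for z
    by (simp add: assms prod_sum_PiE prod.distrib)
  then show ?thesis
    unfolding tensor_poly_iff_PiE by (intro exI[of _ "\<lambda>\<alpha>. \<Prod>k\<in>UNIV. a k (\<alpha> k)"]) blast
qed

locale dyadic_grid =
  fixes l s :: "real^'d" and n :: nat
  assumes sides_pos: "\<forall>k. 0 < s$k"
begin

definition knot :: "'d \<Rightarrow> nat \<Rightarrow> real" where
  "knot k r = l$k + real r * s$k / 2^n"

lemma strict_mono_knot: "strict_mono (knot k)"
  using sides_pos
  by (auto simp: strict_mono_def knot_def intro!: divide_strict_right_mono mult_strict_right_mono)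

lemma knot_mono: "r \<le> r' \<Longrightarrow> knot k r \<le> knot k r'"
  using strict_mono_knot by (simp add: strict_mono_less_eq)

abbreviation cells :: "('d \<Rightarrow> nat) set" where
  "cells \<equiv> Pi\<^sub>E UNIV (\<lambda>_. {..2^n - 1})"

lemma Suc_le_if_in_cells: "\<iota> \<in> cells \<Longrightarrow> Suc (\<iota> k) \<le> 2^n"
  by (auto simp: PiE_iff)
     (metis Suc_pred nat_zero_less_power_iff not_less_eq_eq numeral_2_eq_2 zero_less_Suc)

text \<open>Cells are indexed from 0, whereas \<^const>\<open>dyadic_boxes\<close> counts from 1.\<close>

definition cell :: "('d \<Rightarrow> nat) \<Rightarrow> (real^'d) set" where
  "cell \<iota> = cbox (\<chi> k. knot k (\<iota> k)) (\<chi> k. knot k (Suc (\<iota> k)))"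

lemma dyadic_boxes_eq_cells: "dyadic_boxes l s n = cell ` cells"
proof (intro equalityI subsetI)
  fix B assume "B \<in> dyadic_boxes l s n"
  then obtain i where i: "\<forall>k. 1 \<le> i k \<and> i k \<le> 2^n"
    and B: "B = cbox (\<chi> k. l$k + (real (i k) - 1) * s$k / 2^n) (\<chi> k. l$k + real (i k) * s$k / 2^n)"
    unfolding dyadic_boxes_def by blast
  then have "B = cell (\<lambda>k. i k - 1)"
    by (simp add: cell_def knot_def of_nat_diff)
  moreover have "(\<lambda>k. i k - 1) \<in> cells"
    using i by (simp add: PiE_UNIV_domain diff_le_mono)
  ultimately show "B \<in> cell ` cells"
    by blast
next
  fix B assume "B \<in> cell ` cells"
  then obtain \<iota> where \<iota>: "\<iota> \<in> cells" and B: "B = cell \<iota>"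
    by blast
  have "\<forall>k. 1 \<le> Suc (\<iota> k) \<and> Suc (\<iota> k) \<le> 2^n"
    using Suc_le_if_in_cells[OF \<iota>] by simp
  moreover have "B = cbox (\<chi> k. l$k + (real (Suc (\<iota> k)) - 1) * s$k / 2^n)
      (\<chi> k. l$k + real (Suc (\<iota> k)) * s$k / 2^n)"
    by (simp add: B cell_def knot_def)
  ultimately show "B \<in> dyadic_boxes l s n"
    unfolding dyadic_boxes_def by (intro CollectI exI[of _ "\<lambda>k. Suc (\<iota> k)"]) simp
qed

lemma cell_subset_box:
  assumes "\<iota> \<in> cells"
  shows "cell \<iota> \<subseteq> cbox l (l + s)"
proof
  fix x assume "x \<in> cell \<iota>"
  then have x: "knot k (\<iota> k) \<le> x$k" "x$k \<le> knot k (Suc (\<iota> k))" for k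
    by (simp_all add: cell_def mem_box_cart)
  have "knot k 0 \<le> knot k (\<iota> k)" "knot k (Suc (\<iota> k)) \<le> knot k (2^n)" for k
    using Suc_le_if_in_cells[OF assms] by (simp_all add: knot_mono)
  moreover have "knot k 0 = l$k" "knot k (2^n) = l$k + s$k" for k
    by (simp_all add: knot_def)
  ultimately have "l$k \<le> x$k" "x$k \<le> l$k + s$k" for k
    using x[of k] by (metis order_trans)+
  then show "x \<in> cbox l (l + s)"
    by (simp add: mem_box_cart)
qed

lemma dist_le_in_cell:
  assumes "x \<in> cell \<iota>" "z \<in> cell \<iota>"
  shows "dist x z \<le> (\<Sum>k\<in>UNIV. s$k) / 2^n"
proof -
  have "\<bar>(x - z)$k\<bar> \<le> s$k / 2^n" for k
  proof -
    have "knot k (Suc (\<iota> k)) - knot k (\<iota> k) = s$k / 2^n"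
      by (simp add: knot_def field_simps)
    moreover have "knot k (\<iota> k) \<le> x$k" "x$k \<le> knot k (Suc (\<iota> k))"
      "knot k (\<iota> k) \<le> z$k" "z$k \<le> knot k (Suc (\<iota> k))"
      using assms by (simp_all add: cell_def mem_box_cart)
    ultimately show ?thesis
      by (simp add: abs_le_iff)
  qed
  then have "(\<Sum>k\<in>UNIV. \<bar>(x - z)$k\<bar>) \<le> (\<Sum>k\<in>UNIV. s$k / 2^n)"
    by (rule sum_mono)
  then show ?thesis
    using norm_le_l1_cart[of "x - z"] by (simp add: dist_norm sum_divide_distrib)
qed

lemma content_cell_pos: "0 < Henstock_Kurzweil_Integration.content (cell \<iota>)"
proof -
  have "knot k (\<iota> k) < knot k (Suc (\<iota> k))" for k
    using strict_mono_knot by (simp add: strict_mono_def)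
  moreover have "(\<chi> k. knot k (\<iota> k)) \<in> cell \<iota>"
    using calculation by (simp add: cell_def mem_box_cart less_imp_le)
  ultimately show ?thesis
    unfolding cell_def by (subst content_cbox_cart) (auto intro: prod_pos)
qed

definition dual_factor :: "'d \<Rightarrow> nat \<Rightarrow> real poly" where
  "dual_factor k i = (SOME e. degree e \<le> 2^n - 1 \<and>
     (\<forall>i'\<le>2^n - 1. integral {knot k i'..knot k (Suc i')} (poly e) = (if i' = i then 1 else 0)))"

lemma
  shows degree_dual_factor: "degree (dual_factor k i) \<le> 2^n - 1"
    and integral_dual_factor: "i' \<le> 2^n - 1 \<Longrightarrow>
      integral {knot k i'..knot k (Suc i')} (poly (dual_factor k i)) = (if i' = i then 1 else 0)"
proof -
  have "\<exists>e. degree e \<le> 2^n - 1 \<and>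
     (\<forall>i'\<le>2^n - 1. integral {knot k i'..knot k (Suc i')} (poly e) = (if i' = i then 1 else 0))"
    by (rule exists_block_dual_poly[OF strict_mono_knot[of k], where N = "2^n - 1" and i = i]) blast
  from someI_ex[OF this] show "degree (dual_factor k i) \<le> 2^n - 1"
    and "i' \<le> 2^n - 1 \<Longrightarrow>
      integral {knot k i'..knot k (Suc i')} (poly (dual_factor k i)) = (if i' = i then 1 else 0)"
    unfolding dual_factor_def by blast+
qed

lemma poly_eq_sum_dual_factor:
  assumes "degree P \<le> 2^n - 1"
  shows "poly P x =
    (\<Sum>i\<le>2^n - 1. integral {knot k i..knot k (Suc i)} (poly P) * poly (dual_factor k i) x)"
  by (subst poly_eq_sum_block_integrals[OF strict_mono_knot assms
        degree_dual_factor integral_dual_factor])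
     (simp_all add: poly_sum)

definition dual_poly :: "('d \<Rightarrow> nat) \<Rightarrow> real^'d \<Rightarrow> real" where
  "dual_poly \<iota> z = (\<Prod>k\<in>UNIV. poly (dual_factor k (\<iota> k)) (z$k))"

lemma integral_cell_dual_poly:
  assumes "\<iota>' \<in> cells"
  shows "integral (cell \<iota>') (dual_poly \<iota>) = (if \<iota>' = \<iota> then 1 else 0)"
proof -
  have "integral (cell \<iota>') (dual_poly \<iota>)
      = (\<Prod>k\<in>UNIV. integral {knot k (\<iota>' k)..knot k (Suc (\<iota>' k))} (poly (dual_factor k (\<iota> k))))"
    unfolding cell_def dual_poly_def
    by (intro integral_unique has_integral_prod_cart[where u = "\<chi> k. knot k (\<iota>' k)"
        and v = "\<chi> k. knot k (Suc (\<iota>' k))", simplified])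
       (intro continuous_intros)
  also have "\<dots> = (\<Prod>k\<in>UNIV. if \<iota>' k = \<iota> k then 1 else 0)"
    using assms by (intro prod.cong refl integral_dual_factor) (auto simp: PiE_iff)
  also have "\<dots> = (if \<iota>' = \<iota> then 1 else 0)"
    by (auto simp: fun_eq_iff)
  finally show ?thesis .
qed

lemma integral_cell_sum_dual_poly:
  assumes "\<iota>' \<in> cells"
  shows "integral (cell \<iota>') (\<lambda>z. \<Sum>\<iota>\<in>cells. \<gamma> \<iota> * dual_poly \<iota> z) = \<gamma> \<iota>'"
proof -
  have "(\<lambda>z. \<gamma> \<iota> * dual_poly \<iota> z) integrable_on cell \<iota>'" for \<iota>
    unfolding cell_def dual_poly_def by (intro integrable_continuous continuous_intros)
  then have "integral (cell \<iota>') (\<lambda>z. \<Sum>\<iota>\<in>cells. \<gamma> \<iota> * dual_poly \<iota> z)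
      = (\<Sum>\<iota>\<in>cells. \<gamma> \<iota> * integral (cell \<iota>') (dual_poly \<iota>))"
    by (subst integral_sum) (simp_all add: finite_PiE)
  also have "\<dots> = (\<Sum>\<iota>\<in>cells. \<gamma> \<iota> * (if \<iota>' = \<iota> then 1 else 0))"
    using assms by (simp add: integral_cell_dual_poly)
  also have "\<dots> = \<gamma> \<iota>'"
    using assms by (simp add: if_distrib finite_PiE cong: if_cong)
  finally show ?thesis .
qed

lemma tensor_poly_dual_poly: "tensor_poly c (2^n - 1) (dual_poly \<iota>)"
proof -
  have "\<exists>a. \<forall>x. poly (dual_factor k (\<iota> k)) x = (\<Sum>j\<le>2^n - 1. a j * (x - c$k)^j)" for k
    using poly_eq_sum_powers_at[OF degree_dual_factor] by metis
  then obtain a where "\<And>k x. poly (dual_factor k (\<iota> k)) x = (\<Sum>j\<le>2^n - 1. a k j * (x - c$k)^j)"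
    by metis
  then show ?thesis
    unfolding dual_poly_def by (rule tensor_poly_prod)
qed

lemma tensor_poly_in_span_dual_poly:
  assumes "tensor_poly c (2^n - 1) P"
  obtains \<gamma> where "\<And>z. P z = (\<Sum>\<iota>\<in>cells. \<gamma> \<iota> * dual_poly \<iota> z)"
proof -
  obtain coef where P: "\<And>z. P z =
      (\<Sum>\<alpha>\<in>cells. coef \<alpha> * (\<Prod>k\<in>UNIV. (z$k - c$k) ^ \<alpha> k))"
    using assms unfolding tensor_poly_iff_PiE by blast
  define \<mu> where "\<mu> k j i = integral {knot k i..knot k (Suc i)} (\<lambda>x. (x - c$k) ^ j)" for k j i
  have power: "(x - c$k) ^ j = (\<Sum>i\<le>2^n - 1. \<mu> k j i * poly (dual_factor k i) x)"
    if "j \<le> 2^n - 1" for k j x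
  proof -
    have "poly ([:-c$k, 1:] ^ j) = (\<lambda>x. (x - c$k) ^ j)"
      by (simp add: fun_eq_iff poly_power)
    then show ?thesis
      using poly_eq_sum_dual_factor[of "[:-c$k, 1:] ^ j" x k] that
      by (simp add: \<mu>_def degree_linear_power)
  qed
  have monomial: "(\<Prod>k\<in>UNIV. (z$k - c$k) ^ \<alpha> k)
      = (\<Sum>\<iota>\<in>cells. (\<Prod>k\<in>UNIV. \<mu> k (\<alpha> k) (\<iota> k)) * dual_poly \<iota> z)"
    if "\<alpha> \<in> cells" for \<alpha> z
    using that by (simp add: power PiE_iff prod_sum_PiE dual_poly_def prod.distrib)
  have "P z = (\<Sum>\<iota>\<in>cells. (\<Sum>\<alpha>\<in>cells. coef \<alpha> * (\<Prod>k\<in>UNIV. \<mu> k (\<alpha> k) (\<iota> k))) * dual_poly \<iota> z)" for z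
  proof -
    have "P z = (\<Sum>\<alpha>\<in>cells. \<Sum>\<iota>\<in>cells. coef \<alpha> * (\<Prod>k\<in>UNIV. \<mu> k (\<alpha> k) (\<iota> k)) * dual_poly \<iota> z)"
      by (simp add: P monomial sum_distrib_left mult.assoc)
    also have "\<dots> = (\<Sum>\<iota>\<in>cells. \<Sum>\<alpha>\<in>cells. coef \<alpha> * (\<Prod>k\<in>UNIV. \<mu> k (\<alpha> k) (\<iota> k)) * dual_poly \<iota> z)"
      by (rule sum.swap)
    finally show ?thesis
      by (simp add: sum_distrib_right)
  qed
  then show ?thesis
    by (rule that)
qed

lemma tensor_poly_eq_sum_dual_poly:
  assumes "tensor_poly c (2^n - 1) P"
  shows "P z = (\<Sum>\<iota>\<in>cells. integral (cell \<iota>) P * dual_poly \<iota> z)"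
proof -
  obtain \<gamma> where \<gamma>: "\<And>z. P z = (\<Sum>\<iota>\<in>cells. \<gamma> \<iota> * dual_poly \<iota> z)"
    using tensor_poly_in_span_dual_poly[OF assms] by blast
  then have "integral (cell \<iota>) P = \<gamma> \<iota>" if "\<iota> \<in> cells" for \<iota>
    using integral_cell_sum_dual_poly[OF that] by (simp add: \<gamma>[abs_def])
  then show ?thesis
    by (simp add: \<gamma>)
qed

lemma block_moment_poly_unique:
  "\<exists>!P. tensor_poly c (2^n - 1) P \<and> (\<forall>B\<in>dyadic_boxes l s n. integral B P = integral B h)"
proof (rule ex1I)
  let ?P = "\<lambda>z. \<Sum>\<iota>\<in>cells. integral (cell \<iota>) h * dual_poly \<iota> z"
  have "tensor_poly c (2^n - 1) ?P"
    by (rule tensor_poly_sum[OF _ tensor_poly_dual_poly]) (simp add: finite_PiE)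
  moreover have "\<forall>B\<in>dyadic_boxes l s n. integral B ?P = integral B h"
    unfolding dyadic_boxes_eq_cells
    using integral_cell_sum_dual_poly[where \<gamma> = "\<lambda>\<iota>. integral (cell \<iota>) h"] by blast
  ultimately show
    "tensor_poly c (2^n - 1) ?P \<and> (\<forall>B\<in>dyadic_boxes l s n. integral B ?P = integral B h)"
    by blast
  fix P assume P: "tensor_poly c (2^n - 1) P \<and> (\<forall>B\<in>dyadic_boxes l s n. integral B P = integral B h)"
  then have integral_eq: "integral (cell \<iota>) P = integral (cell \<iota>) h" if "\<iota> \<in> cells" for \<iota>
    using that unfolding dyadic_boxes_eq_cells by blast
  show "P = ?P"
  proof
    fix z
    have "P z = (\<Sum>\<iota>\<in>cells. integral (cell \<iota>) P * dual_poly \<iota> z)"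
      using P by (blast intro: tensor_poly_eq_sum_dual_poly)
    also have "\<dots> = ?P z"
      by (rule sum.cong[OF refl]) (simp add: integral_eq)
    finally show "P z = ?P z" .
  qed
qed

end

lemma block_moment_poly_integral:
  assumes "\<forall>k. 0 < s$k" and "B \<in> dyadic_boxes l s n"
  shows "integral B (block_moment_poly l s c n h) = integral B h"
proof -
  interpret dyadic_grid l s n
    using assms(1) by unfold_locales
  have "\<forall>B\<in>dyadic_boxes l s n. integral B (block_moment_poly l s c n h) = integral B h"
    unfolding block_moment_poly_def using theI'[OF block_moment_poly_unique[of c h]]
    by (rule conjunct2)
  then show ?thesis
    using assms(2) by blast
qed

lemma abs_average_diff_le:
  fixes h :: "'a::euclidean_space \<Rightarrow> real"
  assumes pos: "0 < Henstock_Kurzweil_Integration.content (cbox u v)"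
    and int: "h integrable_on cbox u v"
    and close: "\<And>x. x \<in> cbox u v \<Longrightarrow> \<bar>h x - y\<bar> \<le> e"
  shows "\<bar>integral (cbox u v) h / Henstock_Kurzweil_Integration.content (cbox u v) - y\<bar> \<le> e"
proof -
  let ?c = "Henstock_Kurzweil_Integration.content (cbox u v)"
  obtain x where "x \<in> cbox u v"
    using pos by fastforce
  then have "0 \<le> e"
    using close[of x] by linarith
  have "((\<lambda>x. h x - y) has_integral (integral (cbox u v) h - ?c * y)) (cbox u v)"
    using has_integral_diff[OF integrable_integral[OF int] has_integral_const[of y u v]] by simp
  then have "norm (integral (cbox u v) h - ?c * y) \<le> e * ?c"
    using close by (intro has_integral_bound[OF \<open>0 \<le> e\<close>]) auto
  then show ?thesis
    using pos by (simp add: field_simps abs_le_iff)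
qed

lemma average_close_on_small_boxes:
  fixes h :: "'a::euclidean_space \<Rightarrow> real"
  assumes cont: "continuous_on K h" and "compact K" and "0 < \<epsilon>"
  obtains d where "0 < d"
    "\<And>u v z. cbox u v \<subseteq> K \<Longrightarrow> z \<in> cbox u v \<Longrightarrow> 0 < Henstock_Kurzweil_Integration.content (cbox u v) \<Longrightarrow>
      (\<And>x. x \<in> cbox u v \<Longrightarrow> dist x z < d) \<Longrightarrow>
      \<bar>integral (cbox u v) h / Henstock_Kurzweil_Integration.content (cbox u v) - h z\<bar> < \<epsilon>"
proof -
  obtain d where "0 < d"
    and d: "\<And>x z. x \<in> K \<Longrightarrow> z \<in> K \<Longrightarrow> dist z x < d \<Longrightarrow> dist (h z) (h x) < \<epsilon>/2"
    using uniformly_continuous_onE[OF compact_uniformly_continuous[OF cont \<open>compact K\<close>],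
        of "\<epsilon>/2"] \<open>0 < \<epsilon>\<close>
    by auto
  show ?thesis
  proof (rule that[OF \<open>0 < d\<close>])
    fix u v z assume sub: "cbox u v \<subseteq> K" and "z \<in> cbox u v"
      and pos: "0 < Henstock_Kurzweil_Integration.content (cbox u v)"
      and near: "\<And>x. x \<in> cbox u v \<Longrightarrow> dist x z < d"
    have "\<bar>h x - h z\<bar> \<le> \<epsilon>/2" if "x \<in> cbox u v" for x
      using d[of z x] near[OF that] sub that \<open>z \<in> cbox u v\<close> by (force simp: dist_real_def)
    then have
      "\<bar>integral (cbox u v) h / Henstock_Kurzweil_Integration.content (cbox u v) - h z\<bar> \<le> \<epsilon>/2"
      by (rule abs_average_diff_le[OF pos
            integrable_continuous[OF continuous_on_subset[OF cont sub]]])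
    then show "\<bar>integral (cbox u v) h / Henstock_Kurzweil_Integration.content (cbox u v) - h z\<bar> < \<epsilon>"
      using \<open>0 < \<epsilon>\<close> by linarith
  qed
qed

lemma gamma_cesaro_if_dyadic_integrals_eq:
  assumes spos: "\<forall>k. 0 < s$k" and cont: "continuous_on (cbox l (l + s)) h"
    and eq: "\<And>n B. B \<in> dyadic_boxes l s n \<Longrightarrow> integral B (hs n) = integral B h"
  shows "gamma_cesaro l s hs h"
  unfolding gamma_cesaro_def
proof (intro ballI allI impI)
  fix z \<epsilon> assume "(0::real) < \<epsilon>"
  obtain d where "0 < d" and d: "\<And>u v z. cbox u v \<subseteq> cbox l (l + s) \<Longrightarrow> z \<in> cbox u v \<Longrightarrow>
      0 < Henstock_Kurzweil_Integration.content (cbox u v) \<Longrightarrow> (\<And>x. x \<in> cbox u v \<Longrightarrow> dist x z < d) \<Longrightarrow>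
      \<bar>integral (cbox u v) h / Henstock_Kurzweil_Integration.content (cbox u v) - h z\<bar> < \<epsilon>"
    using average_close_on_small_boxes[OF cont compact_cbox \<open>0 < \<epsilon>\<close>] by blast
  obtain N where N: "(\<Sum>k\<in>UNIV. s$k) / d < 2^N"
    using real_arch_pow[of 2] by auto
  show "\<exists>N. \<forall>n\<ge>N. \<forall>B\<in>dyadic_boxes l s n. z \<in> B \<longrightarrow>
    \<bar>integral B (hs n) / Henstock_Kurzweil_Integration.content B - h z\<bar> < \<epsilon>"
  proof (intro exI[of _ N] allI impI ballI)
    fix n B assume "N \<le> n" "B \<in> dyadic_boxes l s n" "z \<in> B"
    interpret dyadic_grid l s n
      using spos by unfold_locales
    obtain \<iota> where \<iota>: "\<iota> \<in> cells" and B: "B = cell \<iota>"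
      using \<open>B \<in> dyadic_boxes l s n\<close> by (auto simp: dyadic_boxes_eq_cells)
    have "(\<Sum>k\<in>UNIV. s$k) / 2^n \<le> (\<Sum>k\<in>UNIV. s$k) / 2^N"
      using spos \<open>N \<le> n\<close>
      by (intro divide_left_mono sum_nonneg power_increasing) (auto simp: less_imp_le)
    also have "\<dots> < d"
      using N \<open>d > 0\<close> by (simp add: field_simps)
    finally have near: "dist x z < d" if "x \<in> B" for x
    proof -
      assume "(\<Sum>k\<in>UNIV. s$k) / 2^n < d"
      moreover have "dist x z \<le> (\<Sum>k\<in>UNIV. s$k) / 2^n"
        using dist_le_in_cell[of x \<iota> z] that \<open>z \<in> B\<close> B by blast
      ultimately show ?thesis
        by linarith
    qed
    have "\<bar>integral B h / Henstock_Kurzweil_Integration.content B - h z\<bar> < \<epsilon>"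
      unfolding B cell_def
      by (rule d)
         (use near \<open>z \<in> B\<close> cell_subset_box[OF \<iota>] content_cell_pos[of \<iota>]
           in \<open>simp_all add: B cell_def\<close>)
    then show "\<bar>integral B (hs n) / Henstock_Kurzweil_Integration.content B - h z\<bar> < \<epsilon>"
      using eq[OF \<open>B \<in> dyadic_boxes l s n\<close>] by simp
  qed
qed

lemma gamma_cesaro_block_moment_poly:
  assumes "\<forall>k. 0 < s$k" and "continuous_on (cbox l (l + s)) h"
  shows "gamma_cesaro l s (\<lambda>n. block_moment_poly l s c n h) h"
  by (rule gamma_cesaro_if_dyadic_integrals_eq[OF assms block_moment_poly_integral[OF assms(1)]])

lemma implicit_function:
  fixes f :: "'a::euclidean_space \<times> 'b::euclidean_space \<Rightarrow> 'b"
    and f' :: "'a \<times> 'b \<Rightarrow> ('a \<times> 'b) \<Rightarrow>\<^sub>L 'b"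
  assumes deriv: "\<And>z. (f has_derivative blinfun_apply (f' z)) (at z)"
    and cont: "continuous_on UNIV f'"
    and zero: "f (a, b) = 0"
    and inj: "inj (\<lambda>v. blinfun_apply (f' (a, b)) (0, v))"
  obtains U y where "open U" "a \<in> U" "continuous_on U y" "y a = b" "\<And>x. x \<in> U \<Longrightarrow> f (x, y x) = 0"
proof -
  define F where "F z = (fst z, f z)" for z
  define E1 :: "('a \<times> 'b) \<Rightarrow>\<^sub>L ('a \<times> 'b)" where "E1 = Blinfun (\<lambda>h. (fst h, 0))"
  define E2 :: "'b \<Rightarrow>\<^sub>L ('a \<times> 'b)" where "E2 = Blinfun (\<lambda>v. (0, v))"
  have E1: "blinfun_apply E1 h = (fst h, 0)" and E2: "blinfun_apply E2 v = (0, v)" for h v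
    unfolding E1_def E2_def
    by (simp_all add: bounded_linear_Blinfun_apply bounded_linear_Pair bounded_linear_fst
        bounded_linear_zero bounded_linear_ident)
  define F' where "F' z = E1 + (E2 o\<^sub>L f' z)" for z
  have F': "blinfun_apply (F' z) h = (fst h, blinfun_apply (f' z) h)" for z h
    by (simp add: F'_def blinfun.add_left E1 E2)
  have derF: "(F has_derivative blinfun_apply (F' z)) (at z)" for z
    unfolding F_def[abs_def] F'[abs_def]
    by (intro has_derivative_Pair has_derivative_fst[OF has_derivative_ident] deriv)
  have contF: "continuous_on UNIV F'"
    unfolding F'_def
    by (intro continuous_on_add continuous_on_const cont
        bounded_bilinear.continuous_on[OF bounded_bilinear_blinfun_compose])
  obtain invF where invF: "invF o\<^sub>L F' (a, b) = id_blinfun"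
  proof -
    have "inj (blinfun_apply (F' (a, b)))"
    proof (rule injI)
      fix h1 h2 assume eq: "blinfun_apply (F' (a, b)) h1 = blinfun_apply (F' (a, b)) h2"
      then have "fst h1 = fst h2"
        by (simp add: F')
      moreover have "(0, snd h1 - snd h2) = h1 - h2"
        using \<open>fst h1 = fst h2\<close> by (simp add: prod_eq_iff)
      then have "blinfun_apply (f' (a, b)) (0, snd h1 - snd h2) = 0"
        using eq by (simp add: F' blinfun.diff_right)
      then have "snd h1 = snd h2"
        using inj blinfun.zero_right by (metis injD right_minus_eq zero_prod_def)
      ultimately show "h1 = h2"
        by (simp add: prod_eq_iff)
    qed
    then obtain g where "linear g" "g \<circ> blinfun_apply (F' (a, b)) = id"
      using linear_injective_left_inverse[OF bounded_linear.linear[OF blinfun.bounded_linear_right]]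
      by blast
    then have "Blinfun g o\<^sub>L F' (a, b) = id_blinfun"
      by (intro blinfun_eqI)
         (simp add: bounded_linear_Blinfun_apply linear_conv_bounded_linear pointfree_idE)
    then show ?thesis
      by (rule that)
  qed
  have "\<exists>U' V G. (a, b) \<in> U' \<and> open V \<and> F (a, b) \<in> V \<and> homeomorphism U' V F G"
    by (rule inverse_function_theorem[OF open_UNIV derF contF UNIV_I invF]) blast
  then obtain U' V G where "(a, b) \<in> U'" "open V" "F (a, b) \<in> V" and hom: "homeomorphism U' V F G"
    by blast
  define W where "W = (\<lambda>x. (x, 0::'b)) -` V"
  define y where "y x = snd (G (x, 0))" for x
  have FG: "F (G (x, 0)) = (x, 0)" if "x \<in> W" for x
    using hom that by (simp add: W_def homeomorphism_def)
  show ?thesis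
  proof (rule that)
    show "open W"
      unfolding W_def by (intro open_vimage \<open>open V\<close> continuous_intros)
    show "a \<in> W"
      using \<open>F (a, b) \<in> V\<close> zero by (simp add: W_def F_def)
    have "continuous_on V G"
      using hom by (simp add: homeomorphism_def)
    then have "continuous_on W (\<lambda>x. G (x, 0))"
      by (rule continuous_on_compose2) (auto simp: W_def intro: continuous_intros)
    then show "continuous_on W y"
      unfolding y_def by (rule continuous_on_snd)
    have "G (F (a, b)) = (a, b)"
      using hom \<open>(a, b) \<in> U'\<close> by (simp add: homeomorphism_def)
    then show "y a = b"
      using zero by (simp add: y_def F_def)
    fix x assume "x \<in> W"
    then have "G (x, 0) = (x, y x)" and "f (G (x, 0)) = 0"
      using FG[of x] by (simp_all add: F_def y_def prod_eq_iff)
    then show "f (x, y x) = 0"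
      by simp
  qed
qed

lemma inj_partial_if_det_nonzero:
  fixes L :: "('a::real_normed_vector \<times> (real^'n)) \<Rightarrow>\<^sub>L (real^'n)"
  assumes "det (\<chi> i j. blinfun_apply L (0, axis j 1) $ i) \<noteq> 0"
  shows "inj (\<lambda>v. blinfun_apply L (0, v))"
proof -
  have "linear (\<lambda>v. blinfun_apply L (0, v))"
    by (intro bounded_linear.linear bounded_linear_compose[OF blinfun.bounded_linear_right]
        bounded_linear_Pair bounded_linear_zero bounded_linear_ident)
  then show ?thesis
    using assms by (simp add: det_nz_iff_inj[symmetric] matrix_def)
qed

lemma exists_boxes_around:
  fixes y :: "real^'m \<Rightarrow> real^'n"
  assumes "open U" "a \<in> U" "continuous_on U y"
  obtains lR sR lV sV where "a \<in> cbox lR (lR + sR)" "y a \<in> cbox lV (lV + sV)"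
    "\<forall>k. 0 < sR$k" "\<forall>k. 0 < sV$k" "cbox lR (lR + sR) \<subseteq> U"
    "\<And>x. x \<in> cbox lR (lR + sR) \<Longrightarrow> y x \<in> cbox lV (lV + sV)"
proof -
  let ?lV = "y a - 1" and ?sV = "2 :: real^'n"
  have "open (U \<inter> y -` box ?lV (?lV + ?sV))"
    using assms by (intro continuous_open_preimage open_box)
  moreover have "a \<in> U \<inter> y -` box ?lV (?lV + ?sV)"
    using assms by (simp add: mem_box_cart)
  ultimately obtain p q where pq: "cbox p q \<subseteq> U \<inter> y -` box ?lV (?lV + ?sV)" "a \<in> box p q"
    by (meson open_contains_cbox)
  show ?thesis
  proof (rule that[of p "q - p" ?lV ?sV])
    show "\<forall>k. 0 < (q - p)$k"
    proof
      fix k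
      have "p$k < a$k" "a$k < q$k"
        using pq(2) by (simp_all add: mem_box_cart)
      then show "0 < (q - p)$k"
        by simp
    qed
    show "a \<in> cbox p (p + (q - p))" "cbox p (p + (q - p)) \<subseteq> U"
      using pq box_subset_cbox by auto
    fix x assume "x \<in> cbox p (p + (q - p))"
    then have "y x \<in> box ?lV (?lV + ?sV)"
      using pq(1) by auto
    then show "y x \<in> cbox ?lV (?lV + ?sV)"
      using box_subset_cbox by blast
  qed (simp_all add: mem_box_cart)
qed

lemma implicit_function_on_box:
  fixes f :: "(real^'m) \<times> (real^'n) \<Rightarrow> real^'n"
    and f' :: "(real^'m) \<times> (real^'n) \<Rightarrow> ((real^'m) \<times> (real^'n)) \<Rightarrow>\<^sub>L (real^'n)"
  assumes deriv: "\<And>z. (f has_derivative blinfun_apply (f' z)) (at z)"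
    and cont: "continuous_on UNIV f'"
    and zero: "f (a, b) = 0"
    and jac: "det (\<chi> i j. blinfun_apply (f' (a, b)) (0, axis j 1) $ i) \<noteq> 0"
  obtains lR sR lV sV y where "a \<in> cbox lR (lR + sR)" "b \<in> cbox lV (lV + sV)"
    "\<forall>k. 0 < sR$k" "\<forall>k. 0 < sV$k" "continuous_on (cbox lR (lR + sR)) y"
    "\<And>x. x \<in> cbox lR (lR + sR) \<Longrightarrow> y x \<in> cbox lV (lV + sV) \<and> f (x, y x) = 0"
proof -
  obtain U y where U: "open U" "a \<in> U" and cont_y: "continuous_on U y" and "y a = b"
    and f_y: "\<And>x. x \<in> U \<Longrightarrow> f (x, y x) = 0"
    by (rule implicit_function[OF deriv cont zero inj_partial_if_det_nonzero[OF jac]]) blast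
  obtain lR sR lV sV where boxes: "a \<in> cbox lR (lR + sR)" "y a \<in> cbox lV (lV + sV)"
    "\<forall>k. 0 < sR$k" "\<forall>k. 0 < sV$k" and sub: "cbox lR (lR + sR) \<subseteq> U"
    and y_V: "\<And>x. x \<in> cbox lR (lR + sR) \<Longrightarrow> y x \<in> cbox lV (lV + sV)"
    by (rule exists_boxes_around[OF U cont_y]) blast
  show ?thesis
  proof (rule that[OF boxes(1) _ boxes(3,4)])
    show "b \<in> cbox lV (lV + sV)"
      using boxes(2) \<open>y a = b\<close> by simp
    show "continuous_on (cbox lR (lR + sR)) y"
      by (rule continuous_on_subset[OF cont_y sub])
    show "y x \<in> cbox lV (lV + sV) \<and> f (x, y x) = 0" if "x \<in> cbox lR (lR + sR)" for x
      using y_V[OF that] f_y[of x] sub that by blast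
  qed
qed

definition drop3 :: "real^3 \<Rightarrow> real^2" where
  "drop3 w = (\<chi> i. w $ (if i = 1 then 1 else 2))"

lemma drop3_ext3 [simp]: "drop3 (ext3 x t) = x"
  by (simp add: drop3_def ext3_def vec_eq_iff forall_2)

lemma continuous_on_drop3: "continuous_on S drop3"
  unfolding drop3_def by (intro continuous_intros)

lemma ext3_nth [simp]:
  "ext3 x t $ 1 = x$1" "ext3 x t $ 2 = x$2" "ext3 x t $ 3 = t"
  by (simp_all add: ext3_def)

lemma cbox_ext3:
  "cbox (ext3 l t0) (ext3 l t0 + ext3 s t1) =
    {ext3 x t | x t. x \<in> cbox l (l + s) \<and> t \<in> {t0..t0 + t1}}"
proof (intro equalityI subsetI)
  fix w assume w: "w \<in> cbox (ext3 l t0) (ext3 l t0 + ext3 s t1)"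
  have "w = ext3 (vector [w$1, w$2]) (w$3)"
    by (simp add: vec_eq_iff forall_3)
  moreover have "vector [w$1, w$2] \<in> cbox l (l + s)" "w$3 \<in> {t0..t0 + t1}"
    using w by (simp_all add: mem_box_cart forall_2 forall_3)
  ultimately show "w \<in> {ext3 x t | x t. x \<in> cbox l (l + s) \<and> t \<in> {t0..t0 + t1}}"
    by blast
qed (auto simp: mem_box_cart forall_2 forall_3)

theorem theorem2:
  fixes f :: "(real^2) \<times> (real^2) \<Rightarrow> real^2"
    and f' :: "(real^2) \<times> (real^2) \<Rightarrow> (((real^2) \<times> (real^2)) \<Rightarrow>\<^sub>L (real^2))"
    and a b :: "real^2"
  assumes deriv: "\<And>z. (f has_derivative blinfun_apply (f' z)) (at z)"
    and cont_deriv: "continuous_on UNIV f'"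
    and zero: "f (a, b) = 0"
    and jac: "det (\<chi> i j. blinfun_apply (f' (a, b)) (0, axis j 1) $ i) \<noteq> 0"
  shows "\<exists>(lR :: real^2) (sR :: real^2) (lV :: real^2) (sV :: real^2) (j :: 2) (j' :: 2)
            (p :: real^3 \<Rightarrow> real) (q :: real^2 \<Rightarrow> real).
     (\<forall>k. 0 < sR$k) \<and> (\<forall>k. 0 < sV$k) \<and>
     a \<in> cbox lR (lR + sR) \<and>
     (\<forall>k. b$k \<in> {lV$k .. lV$k + sV$k}) \<and>
     j \<noteq> j' \<and>
     continuous_on {ext3 x t | x t. x \<in> cbox lR (lR + sR) \<and> t \<in> {lV$j' .. lV$j' + sV$j'}} p \<and>
     continuous_on (cbox lR (lR + sR)) q \<and>
     (\<forall>x\<in>cbox lR (lR + sR). \<forall>t\<in>{lV$j' .. lV$j' + sV$j'}.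
        p (ext3 x t) \<in> {lV$j .. lV$j + sV$j}) \<and>
     (\<forall>x\<in>cbox lR (lR + sR). q x \<in> {lV$j' .. lV$j' + sV$j'}) \<and>
     (\<forall>x\<in>cbox lR (lR + sR).
        f (x, \<chi> i. if i = j' then q x else p (ext3 x (q x))) = 0) \<and>
     gamma_cesaro (ext3 lR (lV$j')) (ext3 sR (sV$j'))
       (\<lambda>n. block_moment_poly (ext3 lR (lV$j')) (ext3 sR (sV$j')) (ext3 a (b$j')) n p) p \<and>
     gamma_cesaro lR sR (\<lambda>m. block_moment_poly lR sR a m q) q"
proof -
  obtain lR sR lV sV y where a: "a \<in> cbox lR (lR + sR)" and b: "b \<in> cbox lV (lV + sV)"
    and sR: "\<forall>k. 0 < sR$k" and sV: "\<forall>k. 0 < sV$k" and cont_y: "continuous_on (cbox lR (lR + sR)) y"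
    and y: "\<And>x. x \<in> cbox lR (lR + sR) \<Longrightarrow> y x \<in> cbox lV (lV + sV) \<and> f (x, y x) = 0"
    by (rule implicit_function_on_box[OF deriv cont_deriv zero jac]) blast
  txt \<open>Both coordinates of the solution come from one implicit function, so p ignores its
    last argument.\<close>
  define q where "q x = y x $ 1" for x
  define p where "p w = y (drop3 w) $ 2" for w
  have cont_p: "continuous_on (cbox (ext3 lR (lV$1)) (ext3 lR (lV$1) + ext3 sR (sV$1))) p"
    unfolding p_def cbox_ext3
    by (intro continuous_on_compose2[OF cont_y] continuous_intros continuous_on_drop3) auto
  have cont_q: "continuous_on (cbox lR (lR + sR)) q"
    unfolding q_def by (intro continuous_intros cont_y)
  have y_eq: "(\<chi> i. if i = 1 then q x else p (ext3 x (q x))) = y x" for x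
    by (simp add: vec_eq_iff forall_2 p_def q_def)
  have "\<forall>k. 0 < ext3 sR (sV$1) $ k"
    using sR sV by (simp add: forall_3)
  note gamma = gamma_cesaro_block_moment_poly[OF this cont_p]
    gamma_cesaro_block_moment_poly[OF sR cont_q]
  show ?thesis
  proof (rule exI[of _ lR], rule exI[of _ sR], rule exI[of _ lV], rule exI[of _ sV], rule exI[of _ 2],
      rule exI[of _ 1], rule exI[of _ p], rule exI[of _ q], intro conjI)
  qed (use sR sV a b y cont_p cont_q gamma in \<open>auto simp: mem_box_cart p_def q_def y_eq cbox_ext3\<close>)
qed

end
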